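(* For each irreducible representation $\alpha$ of $G^n$, let $\widetilde{\mathcal H}^\alpha_r$ be a Hilbert space of dimension $n_\alpha$ with orthonormal basis $\{|\alpha i\rangle_r\}_{i=1}^{n_\alpha}$, and let $\widetilde{\mathcal H}^{\bar\alpha}_{\bar r}$ be a Hilbert space of dimension $\bar n_{\bar\alpha}$ with orthonormal basis $\{|\bar\alpha j\rangle_{\bar r}\}_{j=1}^{\bar n_{\bar\alpha}}$. Define $$W:\widetilde{\mathcal H}\to\bigoplus_\alpha\widetilde{\mathcal H}^\alpha_r\otimes\widetilde{\mathcal H}^{\bar\alpha}_{\bar r},\qquad W\Big(\sum_{\alpha ijk}\widetilde\psi_{\alpha ij}|\alpha ik\rangle_r|\bar\alpha jk\rangle_{\bar r}\Big)=\sum_{\alpha ij}\sqrt{d_\alpha}\,\widetilde\psi_{\alpha ij}\,|\alpha i\rangle_r|\bar\alpha j\rangle_{\bar r}.$$ Then: - $W$ is a unitary isomorphism. - Under conjugation by $W$ (with elements of $\widetilde{\mathcal A}_r$, $\widetilde{\mathcal A}_{\bar r}$ restricted to $\widetilde{\mathcal H}$), one has $$W\widetilde{\mathcal A}_rW^{\dagger}=\bigoplus_\alpha\mathcal B(\widetilde{\mathcal H}^\alpha_r)\otimes1^{\bar\alpha}_{\bar r}\quad\text{and}\quad W\widetilde{\mathcal A}_{\bar r}W^\dagger=\bigoplus_\alpha1^\alpha_r\otimes\mathcal B(\widetilde{\mathcal H}^{\bar\alpha}_{\bar r}).$$ - Explicitly, the element of $\widetilde{\mathcal A}_r$ with coefficients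 $\widetilde{\mathcal O}_{\alpha ij}$, namely $\sum_{\alpha ii'jk\ell}\widetilde{\mathcal O}_{\alpha ij}|\alpha ik\rangle_r\langle\alpha j\ell|\otimes|\bar\alpha i'k\rangle_{\bar r}\langle\bar\alpha i'\ell|$, is mapped to $\bigoplus_\alpha\big(\sum_{ij}d_\alpha\widetilde{\mathcal O}_{\alpha ij}|\alpha i\rangle_r\langle\alpha j|\big)\otimes 1^{\bar\alpha}_{\bar r}$.
   Context: Setup. Let $G$ be a compact Lie group (possibly finite) with normalized Haar measure $dg$ ($\int dg=1$). For each irreducible unitary representation $\alpha$ fix unitary matrices $D^\alpha(g)$ of dimension $d_\alpha$; the conjugate representation is $D^{\bar\alpha}=\overline{D^\alpha}$. Let $\Lambda=(V,E)$ be a finite directed graph; loops and multiple edges are allowed. Each edge $e$ carries $\mathcal H_e=L^2(G)$ with unitaries $L_e(g)|h\rangle=|gh\rangle$ and $R_e(g^{-1})|h\rangle=|hg^{-1}\rangle$. Each vertex $v$ carries a Hilbert space $\mathcal H_v$ with a unitary representation $U_v$ of $G$. All these spaces are taken finite-dimensional by truncating to finitely many irreducible isotypic sectors, invariant under the group actions. The pre-gauged space is $\mathcal H=\bigotimes_v\mathcal H_v\otimes\bigotimes_e\mathcal H_e$. The gauge transformation at $v$ is $A_v(g)=U_v(g)\prod_{e\in E^-(v)}L_e(g)\prod_{e\in E^+(v)}R_e(g^{-1})$, where $E^-(v)$ is the set of edges oriented out of $v$ and $E^+(v)$ the set of edges oriented into $v$. Set $\Pi_v=\int dg\,A_v(g)$,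 $\Pi_{GI}=\prod_v\Pi_v$ and $\widetilde{\mathcal H}=\Pi_{GI}\mathcal H$. Subregions. A subregion $r$ is an arbitrary subset of $V\cup E$, and $\bar r$ is its complement. Let $\mathcal H_r=\bigotimes_{x\in r}\mathcal H_x$, $\mathcal A_r=\mathcal B(\mathcal H_r)\otimes1_{\bar r}$ and $\mathcal A_{\bar r}=1_r\otimes\mathcal B(\mathcal H_{\bar r})$. Define $\widetilde{\mathcal A}_r=\Pi_{GI}\mathcal A_r\Pi_{GI}$ and $\widetilde{\mathcal A}_{\bar r}=\Pi_{GI}\mathcal A_{\bar r}\Pi_{GI}$. Let $V_r$ be the set of vertices $v$ with $v$ and all its incident edges in $r$; define $V_{\bar r}$ likewise; let $V_c=V\setminus(V_r\cup V_{\bar r})=\{v_1,\dots,v_n\}$. Put $\hat{\mathcal H}_r=\prod_{v\in V_r}\Pi_v\,\mathcal H_r$ and $\hat{\mathcal H}_{\bar r}=\prod_{v\in V_{\bar r}}\Pi_v\,\mathcal H_{\bar r}$. For $v_i\in V_c$ write $A_{v_i}(g)=A_{v_i,r}(g)A_{v_i,\bar r}(g)$, splitting the tensor factors acting on $r$ and $\bar r$. For $g\in G^n$ set $A_r(g)=\prod_iA_{v_i,r}(g_i)$ and $A_{\bar r}(g)=\prod_i A_{v_i,\bar r}(g_i)$, representations of $G^n$ on $\hat{\mathcal H}_r$ and $\hat{\mathcal H}_{\bar r}$. Irreducible representations of $G^n$ are $\alpha=\alpha_1\boxtimes\cdots\boxtimes\alpha_n$, with $d_\alpha=\prod d_{\alpha_i}$.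 Orthonormal bases: $\{|\alpha ik\rangle_r\}$ of $\hat{\mathcal H}_r$, with $1\le i\le n_\alpha$ (possibly $0$) and $1\le k\le d_\alpha$, such that $A_r(g)|\alpha ik\rangle_r=\sum_{k'}D^\alpha_{k'k}(g)|\alpha ik'\rangle_r$; and $\{|\bar\beta j\ell\rangle_{\bar r}\}$ of $\hat{\mathcal H}_{\bar r}$, with $1\le j\le\bar n_{\bar\beta}$, such that $A_{\bar r}(g)|\bar\beta j\ell\rangle_{\bar r}=\sum_{\ell'}D^{\bar\beta}_{\ell'\ell}(g)|\bar\beta j\ell'\rangle_{\bar r}$. It is known (Lemma 1 of the setting) that every element of $\widetilde{\mathcal H}$ has the form $\sum_{\alpha ijk}\widetilde\psi_{\alpha ij}|\alpha ik\rangle_r|\bar\alpha jk\rangle_{\bar r}$ with $i\le n_\alpha$, $j\le\bar n_{\bar\alpha}$, $k\le d_\alpha$. Also, $\widetilde{\mathcal A}_r$ consists exactly of the operators $\sum_{\alpha ii'jk\ell}\widetilde{\mathcal O}_{\alpha ij}|\alpha ik\rangle_r\langle\alpha j\ell|\otimes|\bar\alpha i'k\rangle_{\bar r}\langle\bar\alpha i'\ell|$, and these annihilate $\widetilde{\mathcal H}^\perp$. *)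

theory Defs
  imports Complex_Main "HOL-Library.FuncSet"
begin

text \<open>Labels of type 'a stand for the finitely many
  irreducible representations alpha of G^n retained after truncation (set A); the label alpha
  on the r-bar side stands for the conjugate irrep.  d a = d_alpha, n a = n_alpha,
  nb a = bar n_{bar alpha}.  Indices are 0-based.  A vector of hat H_r (x) hat H_rbar is given by
  its coefficients v (a,i,k) (b,j,l) with respect to the orthonormal product basis
  |a i k>_r |bar b j l>_rbar.\<close>

definition Ir :: "'a set \<Rightarrow> ('a \<Rightarrow> nat) \<Rightarrow> ('a \<Rightarrow> nat) \<Rightarrow> ('a \<times> nat \<times> nat) set" where
  "Ir A d n = {(a, i, k). a \<in> A \<and> i < n a \<and> k < d a}"

definition Irb :: "'a set \<Rightarrow> ('a \<Rightarrow> nat) \<Rightarrow> ('a \<Rightarrow> nat) \<Rightarrow> ('a \<times> nat \<times> nat) set" where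
  "Irb A d nb = {(b, j, l). b \<in> A \<and> j < nb b \<and> l < d b}"

type_synonym 'a pvec = "'a \<times> nat \<times> nat \<Rightarrow> 'a \<times> nat \<times> nat \<Rightarrow> complex"
type_synonym 'a tvec = "'a \<Rightarrow> nat \<Rightarrow> nat \<Rightarrow> complex"

definition inner_pre :: "'a set \<Rightarrow> ('a \<Rightarrow> nat) \<Rightarrow> ('a \<Rightarrow> nat) \<Rightarrow> ('a \<Rightarrow> nat)
    \<Rightarrow> 'a pvec \<Rightarrow> 'a pvec \<Rightarrow> complex" where
  "inner_pre A d n nb u v = (\<Sum>(x, y) \<in> Ir A d n \<times> Irb A d nb. cnj (u x y) * v x y)"

definition embed :: "'a set \<Rightarrow> ('a \<Rightarrow> nat) \<Rightarrow> ('a \<Rightarrow> nat) \<Rightarrow> ('a \<Rightarrow> nat)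
    \<Rightarrow> 'a tvec \<Rightarrow> 'a pvec" where
  "embed A d n nb psi = (\<lambda>(a, i, k) (b, j, l).
     if a = b \<and> k = l \<and> a \<in> A \<and> i < n a \<and> j < nb a \<and> k < d a then psi a i j else 0)"

text \<open>The gauge-invariant space tilde H (Lemma 1).\<close>
definition Htil :: "'a set \<Rightarrow> ('a \<Rightarrow> nat) \<Rightarrow> ('a \<Rightarrow> nat) \<Rightarrow> ('a \<Rightarrow> nat) \<Rightarrow> 'a pvec set" where
  "Htil A d n nb = range (embed A d n nb)"

text \<open>Target space bigoplus_a tilde H^a_r (x) tilde H^{bar a}_rbar, coefficients w a i j
  with respect to the orthonormal basis |a i>_r |bar a j>_rbar.\<close>
definition Tidx :: "'a set \<Rightarrow> ('a \<Rightarrow> nat) \<Rightarrow> ('a \<Rightarrow> nat) \<Rightarrow> ('a \<times> nat \<times> nat) set" where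
  "Tidx A n nb = {(a, i, j). a \<in> A \<and> i < n a \<and> j < nb a}"

definition Tsp :: "'a set \<Rightarrow> ('a \<Rightarrow> nat) \<Rightarrow> ('a \<Rightarrow> nat) \<Rightarrow> 'a tvec set" where
  "Tsp A n nb = {w. \<forall>a i j. (a, i, j) \<notin> Tidx A n nb \<longrightarrow> w a i j = 0}"

definition inner_T :: "'a set \<Rightarrow> ('a \<Rightarrow> nat) \<Rightarrow> ('a \<Rightarrow> nat) \<Rightarrow> 'a tvec \<Rightarrow> 'a tvec \<Rightarrow> complex" where
  "inner_T A n nb u v = (\<Sum>(a, i, j) \<in> Tidx A n nb. cnj (u a i j) * v a i j)"

definition Wmap :: "'a set \<Rightarrow> ('a \<Rightarrow> nat) \<Rightarrow> ('a \<Rightarrow> nat) \<Rightarrow> ('a \<Rightarrow> nat) \<Rightarrow> 'a pvec \<Rightarrow> 'a tvec" where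
  "Wmap A d n nb v = (\<lambda>a i j. if a \<in> A \<and> i < n a \<and> j < nb a
      then complex_of_real (sqrt (real (d a))) * v (a, i, 0) (a, j, 0) else 0)"

text \<open>The element of tilde A_r with coefficients O:
  sum O_{a i j} |a i k>_r<a j l| (x) |bar a i' k>_rbar<bar a i' l|.\<close>
definition op_r :: "'a set \<Rightarrow> ('a \<Rightarrow> nat) \<Rightarrow> ('a \<Rightarrow> nat) \<Rightarrow> ('a \<Rightarrow> nat)
    \<Rightarrow> 'a tvec \<Rightarrow> 'a pvec \<Rightarrow> 'a pvec" where
  "op_r A d n nb Oc v = (\<lambda>(a, i, k) (b, i', k2).
     if a = b \<and> k = k2 \<and> a \<in> A \<and> i < n a \<and> i' < nb a \<and> k < d a
     then (\<Sum>j < n a. \<Sum>l < d a. Oc a i j * v (a, j, l) (a, i', l)) else 0)"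

text \<open>The element of tilde A_rbar with coefficients O:
  sum O_{a i j} |a i' k>_r<a i' l| (x) |bar a i k>_rbar<bar a j l|.\<close>
definition op_rb :: "'a set \<Rightarrow> ('a \<Rightarrow> nat) \<Rightarrow> ('a \<Rightarrow> nat) \<Rightarrow> ('a \<Rightarrow> nat)
    \<Rightarrow> 'a tvec \<Rightarrow> 'a pvec \<Rightarrow> 'a pvec" where
  "op_rb A d n nb Oc v = (\<lambda>(a, i', k) (b, i, k2).
     if a = b \<and> k = k2 \<and> a \<in> A \<and> i' < n a \<and> i < nb a \<and> k < d a
     then (\<Sum>j < nb a. \<Sum>l < d a. Oc a i j * v (a, i', l) (a, j, l)) else 0)"

definition Atil_r :: "'a set \<Rightarrow> ('a \<Rightarrow> nat) \<Rightarrow> ('a \<Rightarrow> nat) \<Rightarrow> ('a \<Rightarrow> nat) \<Rightarrow> ('a pvec \<Rightarrow> 'a pvec) set" where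
  "Atil_r A d n nb = range (op_r A d n nb)"

definition Atil_rb :: "'a set \<Rightarrow> ('a \<Rightarrow> nat) \<Rightarrow> ('a \<Rightarrow> nat) \<Rightarrow> ('a \<Rightarrow> nat) \<Rightarrow> ('a pvec \<Rightarrow> 'a pvec) set" where
  "Atil_rb A d n nb = range (op_rb A d n nb)"

definition blk_r :: "'a set \<Rightarrow> ('a \<Rightarrow> nat) \<Rightarrow> ('a \<Rightarrow> nat) \<Rightarrow> 'a tvec \<Rightarrow> 'a tvec \<Rightarrow> 'a tvec" where
  "blk_r A n nb M w = (\<lambda>a i j. if a \<in> A \<and> i < n a \<and> j < nb a
      then (\<Sum>i2 < n a. M a i i2 * w a i2 j) else 0)"

definition blk_rb :: "'a set \<Rightarrow> ('a \<Rightarrow> nat) \<Rightarrow> ('a \<Rightarrow> nat) \<Rightarrow> 'a tvec \<Rightarrow> 'a tvec \<Rightarrow> 'a tvec" where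
  "blk_rb A n nb M w = (\<lambda>a i j. if a \<in> A \<and> i < n a \<and> j < nb a
      then (\<Sum>j2 < nb a. M a j j2 * w a i j2) else 0)"

end

theory Submission
  imports Defs
begin

text \<open>A gauge-invariant vector is determined by its coefficients \<open>\<psi>\<^sub>\<alpha>\<^sub>i\<^sub>j\<close>, each repeated
  along the \<open>d\<^sub>\<alpha>\<close> diagonal entries \<open>k\<close>; so its squared norm is \<open>\<Sum> d\<^sub>\<alpha> |\<psi>\<^sub>\<alpha>\<^sub>i\<^sub>j|\<^sup>2\<close>, and
  the factor \<open>\<surd>d\<^sub>\<alpha>\<close> in \<open>W\<close> makes it an isometry onto the block space. An element of
  the algebra of \<open>r\<close> acts on \<open>\<psi>\<close> by left multiplication with \<open>O\<^sub>\<alpha>\<close> on the \<open>r\<close>-index, picking up a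
  factor \<open>d\<^sub>\<alpha>\<close> from the contraction over \<open>\<ell>\<close>; since \<open>d\<^sub>\<alpha> > 0\<close> every block matrix arises
  this way. The complementary algebra acts in the same way on the other index.\<close>

lemma Wmap_embed:
  assumes "\<forall>a\<in>A. 0 < d a"
  shows "Wmap A d n nb (embed A d n nb psi) = (\<lambda>a i j. if a \<in> A \<and> i < n a \<and> j < nb a
           then complex_of_real (sqrt (real (d a))) * psi a i j else 0)"
  using assms by (auto simp: Wmap_def embed_def fun_eq_iff)

definition Wmap_inv :: "'a set \<Rightarrow> ('a \<Rightarrow> nat) \<Rightarrow> ('a \<Rightarrow> nat) \<Rightarrow> ('a \<Rightarrow> nat) \<Rightarrow> 'a tvec \<Rightarrow> 'a pvec"
  where "Wmap_inv A d n nb w = embed A d n nb (\<lambda>a i j. w a i j / complex_of_real (sqrt (real (d a))))"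

lemma Wmap_Wmap_inv:
  assumes "\<forall>a\<in>A. 0 < d a" and "w \<in> Tsp A n nb"
  shows "Wmap A d n nb (Wmap_inv A d n nb w) = w"
  using assms by (auto simp: Wmap_inv_def Wmap_embed Tsp_def Tidx_def fun_eq_iff)

lemma inj_on_Wmap_Htil:
  assumes "\<forall>a\<in>A. 0 < d a"
  shows "inj_on (Wmap A d n nb) (Htil A d n nb)"
proof (rule inj_onI)
  fix u v assume "u \<in> Htil A d n nb" "v \<in> Htil A d n nb" and eq: "Wmap A d n nb u = Wmap A d n nb v"
  then obtain p q where u: "u = embed A d n nb p" and v: "v = embed A d n nb q"
    by (auto simp: Htil_def)
  have "p a i j = q a i j" if "a \<in> A" "i < n a" "j < nb a" for a i j
    using fun_cong[OF fun_cong[OF fun_cong[OF eq, of a], of i], of j] that assms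
    by (auto simp: u v Wmap_embed)
  then show "u = v"
    by (auto simp: u v embed_def fun_eq_iff)
qed

lemma Wmap_image_Htil:
  assumes "\<forall>a\<in>A. 0 < d a"
  shows "Wmap A d n nb ` Htil A d n nb = Tsp A n nb"
proof
  show "Wmap A d n nb ` Htil A d n nb \<subseteq> Tsp A n nb"
    using assms by (auto simp: Htil_def Wmap_embed Tsp_def Tidx_def)
  show "Tsp A n nb \<subseteq> Wmap A d n nb ` Htil A d n nb"
  proof
    fix w assume "w \<in> Tsp A n nb"
    then have "w = Wmap A d n nb (Wmap_inv A d n nb w)"
      using assms by (simp add: Wmap_Wmap_inv)
    then show "w \<in> Wmap A d n nb ` Htil A d n nb"
      by (auto simp: Htil_def Wmap_inv_def)
  qed
qed

lemma the_inv_into_Wmap: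
  assumes "\<forall>a\<in>A. 0 < d a" and "w \<in> Tsp A n nb"
  shows "the_inv_into (Htil A d n nb) (Wmap A d n nb) w = Wmap_inv A d n nb w"
  using assms
  by (intro the_inv_into_f_eq inj_on_Wmap_Htil Wmap_Wmap_inv) (auto simp: Htil_def Wmap_inv_def)

lemma finite_Tidx: "finite A \<Longrightarrow> finite (Tidx A n nb)"
proof -
  have "Tidx A n nb = Sigma A (\<lambda>a. {..<n a} \<times> {..<nb a})"
    by (auto simp: Tidx_def)
  then show "finite A \<Longrightarrow> finite (Tidx A n nb)" by simp
qed

lemma finite_Ir: "finite A \<Longrightarrow> finite (Ir A d n)"
  using finite_Tidx[of A n d] by (simp add: Tidx_def Ir_def)

lemma finite_Irb: "finite A \<Longrightarrow> finite (Irb A d nb)"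
  using finite_Tidx[of A nb d] by (simp add: Tidx_def Irb_def)

text \<open>The support of the summand is the set of diagonal pairs \<open>(\<alpha> i k, \<alpha> j k)\<close>; summing out
  \<open>k < d\<^sub>\<alpha>\<close> produces the weight \<open>d\<^sub>\<alpha>\<close>.\<close>

lemma inner_pre_embed:
  assumes "finite A"
  shows "inner_pre A d n nb (embed A d n nb p) (embed A d n nb q) =
    (\<Sum>(a, i, j) \<in> Tidx A n nb. of_nat (d a) * (cnj (p a i j) * q a i j))"
proof -
  define D where "D = Sigma (Tidx A n nb) (\<lambda>(a, _, _). {..<d a})"
  define g where "g = (\<lambda>((a, i, j), k). ((a, i, k), (a, j, k)) :: ('a \<times> nat \<times> nat) \<times> ('a \<times> nat \<times> nat))"
  have fin: "finite (Ir A d n \<times> Irb A d nb)"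
    using assms by (simp add: finite_Ir finite_Irb)
  have "g ` D \<subseteq> Ir A d n \<times> Irb A d nb"
    by (auto simp: g_def D_def Tidx_def Ir_def Irb_def)
  moreover have "cnj (embed A d n nb p x y) * embed A d n nb q x y = 0"
    if "(x, y) \<notin> g ` D" for x y
  proof -
    have "((a, i, k), (a, j, k)) \<in> g ` D" if "a \<in> A" "i < n a" "j < nb a" "k < d a" for a i j k
      using that by (auto simp: g_def D_def Tidx_def intro!: image_eqI[where x = "((a, i, j), k)"])
    with \<open>(x, y) \<notin> g ` D\<close> show ?thesis
      by (cases x; cases y) (auto simp: embed_def)
  qed
  ultimately have "inner_pre A d n nb (embed A d n nb p) (embed A d n nb q)
      = (\<Sum>(x, y) \<in> g ` D. cnj (embed A d n nb p x y) * embed A d n nb q x y)"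
    unfolding inner_pre_def by (intro sum.mono_neutral_right fin) auto
  also have "\<dots> = (\<Sum>((a, i, j), k) \<in> D. cnj (p a i j) * q a i j)"
    by (subst sum.reindex) (auto simp: inj_on_def g_def D_def Tidx_def embed_def intro!: sum.cong)
  also have "\<dots> = (\<Sum>(a, i, j) \<in> Tidx A n nb. of_nat (d a) * (cnj (p a i j) * q a i j))"
    unfolding D_def using finite_Tidx[OF assms] by (subst sum.Sigma[symmetric]) (auto intro!: sum.cong)
  finally show ?thesis .
qed

lemma inner_T_Wmap:
  assumes "finite A" and "\<forall>a\<in>A. 0 < d a" and "u \<in> Htil A d n nb" and "v \<in> Htil A d n nb"
  shows "inner_T A n nb (Wmap A d n nb u) (Wmap A d n nb v) = inner_pre A d n nb u v"
proof -
  obtain p q where u: "u = embed A d n nb p" and v: "v = embed A d n nb q"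
    using assms(3,4) by (auto simp: Htil_def)
  have sqrt_sq: "complex_of_real (sqrt (real m)) * complex_of_real (sqrt (real m)) = of_nat m" for m
    by (simp flip: of_real_mult)
  have "inner_T A n nb (Wmap A d n nb u) (Wmap A d n nb v)
      = (\<Sum>(a, i, j) \<in> Tidx A n nb. of_nat (d a) * (cnj (p a i j) * q a i j))"
    unfolding inner_T_def u v Wmap_embed[OF assms(2)]
    by (intro sum.cong refl) (auto simp: Tidx_def sqrt_sq)
  also have "\<dots> = inner_pre A d n nb u v"
    unfolding u v by (rule inner_pre_embed[OF assms(1), symmetric])
  finally show ?thesis .
qed

lemma op_r_embed:
  "op_r A d n nb Oc (embed A d n nb psi) =
   embed A d n nb (\<lambda>a i i'. of_nat (d a) * (\<Sum>j < n a. Oc a i j * psi a j i'))"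
  by (auto simp: fun_eq_iff op_r_def embed_def sum_distrib_left intro!: sum.cong)

lemma op_rb_embed:
  "op_rb A d n nb Oc (embed A d n nb psi) =
   embed A d n nb (\<lambda>a i' i. of_nat (d a) * (\<Sum>j < nb a. Oc a i j * psi a i' j))"
  by (auto simp: fun_eq_iff op_rb_def embed_def sum_distrib_left intro!: sum.cong)

lemma Atil_r_image_Htil: "X \<in> Atil_r A d n nb \<Longrightarrow> X ` Htil A d n nb \<subseteq> Htil A d n nb"
  by (auto simp: Atil_r_def Htil_def op_r_embed)

lemma Atil_rb_image_Htil: "X \<in> Atil_rb A d n nb \<Longrightarrow> X ` Htil A d n nb \<subseteq> Htil A d n nb"
  by (auto simp: Atil_rb_def Htil_def op_rb_embed)

lemma mult_scaled_sum_divide_cancel: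
  fixes c :: "'b :: field"
  assumes "c \<noteq> 0"
  shows "c * (k * (\<Sum>j\<in>J. f j * g j / c)) = (\<Sum>j\<in>J. k * f j * g j)"
  using assms by (simp add: sum_distrib_left field_simps)

lemma Wmap_op_r_Wmap_inv:
  assumes "\<forall>a\<in>A. 0 < d a" and "w \<in> Tsp A n nb"
  shows "Wmap A d n nb (op_r A d n nb Oc (Wmap_inv A d n nb w))
       = blk_r A n nb (\<lambda>a i j. of_nat (d a) * Oc a i j) w"
  using assms
  by (auto simp: fun_eq_iff Wmap_inv_def op_r_embed Wmap_embed blk_r_def
                 mult_scaled_sum_divide_cancel)

lemma Wmap_op_rb_Wmap_inv:
  assumes "\<forall>a\<in>A. 0 < d a" and "w \<in> Tsp A n nb"
  shows "Wmap A d n nb (op_rb A d n nb Oc (Wmap_inv A d n nb w))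
       = blk_rb A n nb (\<lambda>a i j. of_nat (d a) * Oc a i j) w"
  using assms
  by (auto simp: fun_eq_iff Wmap_inv_def op_rb_embed Wmap_embed blk_rb_def
                 mult_scaled_sum_divide_cancel)

lemma image_range_eqI:
  assumes "\<And>x. F (X x) = B (s x)" and "\<And>y. \<exists>x. B (s x) = B y"
  shows "F ` range X = range B"
proof -
  have "F ` range X = range (B \<circ> s)"
    using assms(1) by (simp add: image_image comp_def)
  also have "\<dots> = range B"
    using assms(2) by (auto simp: image_iff) (metis rangeI)
  finally show ?thesis .
qed

lemma blk_r_cong: "(\<And>a i j. a \<in> A \<Longrightarrow> M a i j = M' a i j) \<Longrightarrow> blk_r A n nb M = blk_r A n nb M'"
  by (auto simp: blk_r_def fun_eq_iff)

lemma blk_rb_cong: "(\<And>a i j. a \<in> A \<Longrightarrow> M a i j = M' a i j) \<Longrightarrow> blk_rb A n nb M = blk_rb A n nb M'"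
  by (auto simp: blk_rb_def fun_eq_iff)

lemma Wmap_conj_Atil_r:
  assumes "\<forall>a\<in>A. 0 < d a"
  shows "(\<lambda>X. restrict (Wmap A d n nb \<circ> X \<circ> the_inv_into (Htil A d n nb) (Wmap A d n nb)) (Tsp A n nb))
           ` Atil_r A d n nb
       = range (\<lambda>M. restrict (blk_r A n nb M) (Tsp A n nb))"
  unfolding Atil_r_def
proof (rule image_range_eqI)
  show "restrict (Wmap A d n nb \<circ> op_r A d n nb Oc \<circ> the_inv_into (Htil A d n nb) (Wmap A d n nb)) (Tsp A n nb)
      = restrict (blk_r A n nb (\<lambda>a i j. of_nat (d a) * Oc a i j)) (Tsp A n nb)" for Oc
    using assms by (intro restrict_ext) (simp add: the_inv_into_Wmap Wmap_op_r_Wmap_inv)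
  show "\<exists>Oc. restrict (blk_r A n nb (\<lambda>a i j. of_nat (d a) * Oc a i j)) (Tsp A n nb)
      = restrict (blk_r A n nb M) (Tsp A n nb)" for M
    using assms by (intro exI[of _ "\<lambda>a i j. M a i j / of_nat (d a)"] arg_cong[of _ _ "\<lambda>f. restrict f _"] blk_r_cong) simp
qed

lemma Wmap_conj_Atil_rb:
  assumes "\<forall>a\<in>A. 0 < d a"
  shows "(\<lambda>X. restrict (Wmap A d n nb \<circ> X \<circ> the_inv_into (Htil A d n nb) (Wmap A d n nb)) (Tsp A n nb))
           ` Atil_rb A d n nb
       = range (\<lambda>M. restrict (blk_rb A n nb M) (Tsp A n nb))"
  unfolding Atil_rb_def
proof (rule image_range_eqI)
  show "restrict (Wmap A d n nb \<circ> op_rb A d n nb Oc \<circ> the_inv_into (Htil A d n nb) (Wmap A d n nb)) (Tsp A n nb)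
      = restrict (blk_rb A n nb (\<lambda>a i j. of_nat (d a) * Oc a i j)) (Tsp A n nb)" for Oc
    using assms by (intro restrict_ext) (simp add: the_inv_into_Wmap Wmap_op_rb_Wmap_inv)
  show "\<exists>Oc. restrict (blk_rb A n nb (\<lambda>a i j. of_nat (d a) * Oc a i j)) (Tsp A n nb)
      = restrict (blk_rb A n nb M) (Tsp A n nb)" for M
    using assms by (intro exI[of _ "\<lambda>a i j. M a i j / of_nat (d a)"] arg_cong[of _ _ "\<lambda>f. restrict f _"] blk_rb_cong) simp
qed

theorem proposition6:
  fixes A :: "'a set" and d n nb :: "'a \<Rightarrow> nat"
  assumes "finite A" and "\<forall>a\<in>A. 0 < d a"
  defines "W \<equiv> Wmap A d n nb"
      and "Winv \<equiv> the_inv_into (Htil A d n nb) (Wmap A d n nb)"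
  shows
    "(\<forall>psi. W (embed A d n nb psi) = (\<lambda>a i j. if a \<in> A \<and> i < n a \<and> j < nb a
                then complex_of_real (sqrt (real (d a))) * psi a i j else 0))
   \<and> inj_on W (Htil A d n nb)
   \<and> W ` Htil A d n nb = Tsp A n nb
   \<and> (\<forall>u \<in> Htil A d n nb. \<forall>v \<in> Htil A d n nb.
        inner_T A n nb (W u) (W v) = inner_pre A d n nb u v)
   \<and> (\<forall>X \<in> Atil_r A d n nb. X ` Htil A d n nb \<subseteq> Htil A d n nb)
   \<and> (\<forall>X \<in> Atil_rb A d n nb. X ` Htil A d n nb \<subseteq> Htil A d n nb)
   \<and> (\<lambda>X. restrict (W \<circ> X \<circ> Winv) (Tsp A n nb)) ` Atil_r A d n nb
       = (\<lambda>M. restrict (blk_r A n nb M) (Tsp A n nb)) ` UNIV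
   \<and> (\<lambda>X. restrict (W \<circ> X \<circ> Winv) (Tsp A n nb)) ` Atil_rb A d n nb
       = (\<lambda>M. restrict (blk_rb A n nb M) (Tsp A n nb)) ` UNIV
   \<and> (\<forall>Oc. \<forall>w \<in> Tsp A n nb. W (op_r A d n nb Oc (Winv w))
        = blk_r A n nb (\<lambda>a i j. of_nat (d a) * Oc a i j) w)"
  unfolding W_def Winv_def
  using assms(1,2)
  by (simp add: Wmap_embed inj_on_Wmap_Htil Wmap_image_Htil inner_T_Wmap Atil_r_image_Htil
      Atil_rb_image_Htil Wmap_conj_Atil_r Wmap_conj_Atil_rb the_inv_into_Wmap Wmap_op_r_Wmap_inv)

end
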